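(* For the symmetric walk, for the weakly asymmetric walk with any fixed $c>0$, and for the asymmetric walk with any fixed $q<p$, the following holds. If $X_0$ is chosen uniformly at random from $\mathcal T_N$, independently of the steps, then $R_N/N$ converges in distribution to the uniform distribution on $[0,1]$ as $N\to\infty$.
   Context: Fix $N\ge2$ and let $\mathcal T_N=\{0,1,\dots,N\}$. Let $(X_n)_{n\ge0}$ be a nearest-neighbour random walk on $\mathcal T_N$. At each step it moves from $x$ to $x+1$ with probability $p_N$ and to $x-1$ with probability $q_N=1-p_N$, independently of the past, and it is stopped the first time it is at $0$ or $N$. (If it starts at $0$ or $N$ it is stopped immediately; this has vanishing probability and does not affect the limit.) The walk is called: - symmetric if $p_N=q_N=1/2$; - weakly asymmetric (with parameter $c>0$ fixed) if $q_N=1/2-c/N$ and $p_N=1/2+c/N$, for $N$ large; - asymmetric if $p_N=p$ and $q_N=q$ are fixed with $p+q=1$ and $q<p$. For $a\in\mathcal T_N$ let $T_a=\inf\{n\ge1:X_n=a\}$ and $\tau_N=T_0\wedge T_N$. Let $G(y)=\sum_{k=0}^{\tau_N}\mathbf 1\{X_k=y\}$, and let the range be $R_N=\#\{y\in\mathcal T_N:G(y)\ge1\}$. *)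

theory Defs
  imports "HOL-Probability.Probability"
begin

text \<open>Nearest-neighbour walk on {0..N}, stopped at the first visit to 0 or N.
  The start is x; the i.i.d. steps are encoded by a boolean stream (True = step +1).\<close>
fun walk :: "nat \<Rightarrow> int \<Rightarrow> bool stream \<Rightarrow> nat \<Rightarrow> int" where
  "walk N x \<omega> 0 = x"
| "walk N x \<omega> (Suc n) =
     (let y = walk N x \<omega> n in
      if y = 0 \<or> y = int N then y else if \<omega> !! n then y + 1 else y - 1)"

text \<open>Hitting time tau_N = T_0 min T_N (first n \<ge> 1 with X_n in {0,N});
  by convention the walk is stopped immediately (tau = 0) if it starts at 0 or N.\<close>
definition tau :: "nat \<Rightarrow> int \<Rightarrow> bool stream \<Rightarrow> enat" where
  "tau N x \<omega> =
     (if x = 0 \<or> x = int N then 0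
      else if \<exists>n\<ge>1. walk N x \<omega> n \<in> {0, int N}
           then enat (LEAST n. n \<ge> 1 \<and> walk N x \<omega> n \<in> {0, int N}) else \<infinity>)"

definition local_time :: "nat \<Rightarrow> int \<Rightarrow> bool stream \<Rightarrow> int \<Rightarrow> enat" where
  "local_time N x \<omega> y =
     (let S = {k. enat k \<le> tau N x \<omega> \<and> walk N x \<omega> k = y}
      in if finite S then enat (card S) else \<infinity>)"

definition range_walk :: "nat \<Rightarrow> int \<Rightarrow> bool stream \<Rightarrow> nat" where
  "range_walk N x \<omega> = card {y \<in> {0..int N}. local_time N x \<omega> y \<ge> 1}"

definition walk_space :: "nat \<Rightarrow> real \<Rightarrow> (int \<times> bool stream) measure" where
  "walk_space N pN =
     measure_pmf (pmf_of_set {0..int N}) \<Otimes>\<^sub>M stream_space (measure_pmf (bernoulli_pmf pN))"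

definition range_law :: "(nat \<Rightarrow> real) \<Rightarrow> nat \<Rightarrow> real measure" where
  "range_law p N = distr (walk_space N (p N)) borel
      (\<lambda>(x, \<omega>). real (range_walk N x \<omega>) / real N)"

end

theory Submission
  imports Defs
begin

(*
  The law of R_N is computed EXACTLY: for every up-step probability 0 < q \<le> 1 and 1 \<le> r \<le> N,
  averaging over the uniform start x gives P(R_N \<le> r) = (r + 1) / (N + 1).  Hence
  cdf(R_N / N)(t) = (\<lfloor>tN\<rfloor> + 1) / (N + 1) \<rightarrow> t for 0 < t < 1, which is the claim in all
  three regimes (they only serve to guarantee 0 < p N \<le> 1 eventually).

  The exact formula comes from a path decomposition.  Compare the stopped walk with the free
  walk of the same steps.  From an interior start x the free walk a.s. leaves (0, N)
  (a maximum principle for the harmonic function "probability of never leaving"), and on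
  that event the range is the set of values visited before the exit.  If the exit is at 0,
  then R_N \<le> r iff the walk leaves (0, r) at 0; if the exit is at N, iff it leaves (N - r, N)
  at N.  Summed over x, and after translating the second family of events by r - N, the
  exit probabilities of the interval (0, r) pair up to give 1 for each of the r - 1 interior
  starts, while the two boundary starts contribute 1 each: r + 1 in total.
*)

definition step_value :: "bool \<Rightarrow> int" where
  "step_value b = (if b then 1 else -1)"

primrec free_walk :: "int \<Rightarrow> bool stream \<Rightarrow> nat \<Rightarrow> int" where
  "free_walk x \<omega> 0 = x"
| "free_walk x \<omega> (Suc k) = free_walk x \<omega> k + step_value (\<omega> !! k)"

lemma free_walk_shift: "free_walk (x + d) \<omega> k = free_walk x \<omega> k + d"
  by (induction k) auto

lemma free_walk_Stream: "free_walk x (t ## \<omega>) (Suc k) = free_walk (x + step_value t) \<omega> k"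
  by (induction k) auto

lemma free_walk_unit_step: "\<bar>free_walk x \<omega> (Suc k) - free_walk x \<omega> k\<bar> \<le> 1"
  by (simp add: step_value_def)

section \<open>Paths with steps of size at most one\<close>

lemma unit_steps_ivt_up:
  fixes f :: "nat \<Rightarrow> int"
  assumes step: "\<And>k. \<bar>f (Suc k) - f k\<bar> \<le> 1" and "i \<le> j" "f i \<le> c" "c \<le> f j"
  shows "\<exists>k. i \<le> k \<and> k \<le> j \<and> f k = c"
  using assms(2-)
proof (induction j)
  case (Suc j)
  show ?case
  proof (cases "i \<le> j \<and> c \<le> f j")
    case True
    then show ?thesis using Suc by fastforce
  next
    case False
    then have "i = Suc j \<or> f j < c" using Suc.prems by auto
    then show ?thesis
    proof
      assume "f j < c"
      then have "f (Suc j) = c" using Suc.prems step[of j] by auto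
      then show ?thesis using Suc.prems by auto
    qed (use Suc.prems in auto)
  qed
qed auto

lemma unit_steps_ivt_down:
  fixes f :: "nat \<Rightarrow> int"
  assumes step: "\<And>k. \<bar>f (Suc k) - f k\<bar> \<le> 1" and "i \<le> j" "c \<le> f i" "f j \<le> c"
  shows "\<exists>k. i \<le> k \<and> k \<le> j \<and> f k = c"
proof -
  have "\<exists>k. i \<le> k \<and> k \<le> j \<and> - f k = - c"
    by (rule unit_steps_ivt_up) (use assms in \<open>auto simp: abs_minus_commute\<close>)
  then show ?thesis by auto
qed

lemma card_excursion_le_iff:
  fixes f :: "nat \<Rightarrow> int"
  assumes step: "\<And>i. \<bar>f (Suc i) - f i\<bar> \<le> 1"
    and end0: "f k = 0" and pos: "\<forall>j<k. 0 < f j" and r: "1 \<le> r"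
  shows "card (f ` {..k}) \<le> r \<longleftrightarrow> (\<forall>j<k. f j < int r)"
proof
  assume card: "card (f ` {..k}) \<le> r"
  show "\<forall>j<k. f j < int r"
  proof (rule ccontr)
    assume "\<not> (\<forall>j<k. f j < int r)"
    then obtain j where j: "j < k" "int r \<le> f j" by auto
    have "{0..int r} \<subseteq> f ` {..k}"
    proof
      fix c assume "c \<in> {0..int r}"
      then obtain i where "j \<le> i" "i \<le> k" "f i = c"
        using unit_steps_ivt_down[of f j k c, OF step] j end0 by auto
      then show "c \<in> f ` {..k}" by auto
    qed
    then have "card {0..int r} \<le> card (f ` {..k})" by (intro card_mono) auto
    then show False using card by simp
  qed
next
  assume "\<forall>j<k. f j < int r"
  then have "f ` {..k} \<subseteq> {0..int r - 1}"
    using pos end0 r by (force simp: le_less)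
  then have "card (f ` {..k}) \<le> card {0..int r - 1}" by (intro card_mono) auto
  then show "card (f ` {..k}) \<le> r" by simp
qed

lemma first_exit_unique:
  fixes f :: "nat \<Rightarrow> int"
  assumes "\<not> (a < f k \<and> f k < b)" "\<forall>j<k. a < f j \<and> f j < b"
    and "\<not> (a < f k' \<and> f k' < b)" "\<forall>j<k'. a < f j \<and> f j < b"
  shows "k = k'"
  using assms by (metis linorder_neqE_nat)

definition exit_low :: "int \<Rightarrow> int \<Rightarrow> int \<Rightarrow> bool stream set" where
  "exit_low a b x =
     {\<omega>. \<exists>k. free_walk x \<omega> k = a \<and> (\<forall>j<k. a < free_walk x \<omega> j \<and> free_walk x \<omega> j < b)}"

definition exit_high :: "int \<Rightarrow> int \<Rightarrow> int \<Rightarrow> bool stream set" where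
  "exit_high a b x =
     {\<omega>. \<exists>k. free_walk x \<omega> k = b \<and> (\<forall>j<k. a < free_walk x \<omega> j \<and> free_walk x \<omega> j < b)}"

definition never_exit :: "int \<Rightarrow> int \<Rightarrow> int \<Rightarrow> bool stream set" where
  "never_exit a b x = {\<omega>. \<forall>k. a < free_walk x \<omega> k \<and> free_walk x \<omega> k < b}"

lemma exit_low_high_disjoint:
  assumes "a < b"
  shows "exit_low a b x \<inter> exit_high a b x = {}"
proof (intro equalityI subsetI)
  fix \<omega> assume "\<omega> \<in> exit_low a b x \<inter> exit_high a b x"
  then obtain k k' where
      "free_walk x \<omega> k = a" "\<forall>j<k. a < free_walk x \<omega> j \<and> free_walk x \<omega> j < b"
      "free_walk x \<omega> k' = b" "\<forall>j<k'. a < free_walk x \<omega> j \<and> free_walk x \<omega> j < b"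
    by (auto simp: exit_low_def exit_high_def)
  moreover from this have "k = k'"
    by (intro first_exit_unique[of a "free_walk x \<omega>" k b k']) auto
  ultimately show "\<omega> \<in> {}" using assms by simp
qed simp

lemma never_exit_disjoint: "never_exit a b x \<inter> (exit_low a b x \<union> exit_high a b x) = {}"
  by (auto simp: never_exit_def exit_low_def exit_high_def)

text \<open>Since the steps have size one, a walk that leaves (a, b) does so exactly at a or at b.\<close>
lemma exit_cases:
  assumes "a < x" "x < b" "\<omega> \<notin> never_exit a b x"
  shows "\<omega> \<in> exit_low a b x \<union> exit_high a b x"
proof -
  let ?inside = "\<lambda>k. a < free_walk x \<omega> k \<and> free_walk x \<omega> k < b"
  have ex: "\<exists>k. \<not> ?inside k" using assms(3) by (auto simp: never_exit_def)
  define k where "k = (LEAST k. \<not> ?inside k)"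
  have out: "\<not> ?inside k" unfolding k_def by (rule LeastI_ex[OF ex])
  have before: "\<forall>j<k. ?inside j" unfolding k_def using not_less_Least by blast
  obtain m where m: "k = Suc m"
    using out assms(1,2) by (cases k) auto
  have "free_walk x \<omega> k = a \<or> free_walk x \<omega> k = b"
    using before out free_walk_unit_step[of x \<omega> m] unfolding m by auto
  then show ?thesis using before by (auto simp: exit_low_def exit_high_def)
qed

lemma exit_low_mono: "b \<le> b' \<Longrightarrow> exit_low a b x \<subseteq> exit_low a b' x"
  unfolding exit_low_def using order_less_le_trans by blast

lemma exit_high_mono: "a' \<le> a \<Longrightarrow> exit_high a b x \<subseteq> exit_high a' b x"
  unfolding exit_high_def using order_le_less_trans by blast

lemma exit_high_shift: "exit_high (a + d) (b + d) (x + d) = exit_high a b x"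
  by (auto simp: exit_high_def free_walk_shift)

lemma exit_low_empty:
  assumes "0 < x" "b \<le> x"
  shows "exit_low 0 b x = {}"
proof -
  have False if "free_walk x \<omega> k = 0" "\<forall>j<k. 0 < free_walk x \<omega> j \<and> free_walk x \<omega> j < b" for \<omega> k
  proof -
    have "k \<noteq> 0" using that(1) assms(1) by (intro notI) simp
    then have "free_walk x \<omega> 0 < b" using that(2) by blast
    then show False using assms(2) by simp
  qed
  then show ?thesis by (auto simp: exit_low_def)
qed

lemma exit_high_empty:
  assumes "x < b" "x \<le> a"
  shows "exit_high a b x = {}"
proof -
  have False if "free_walk x \<omega> k = b" "\<forall>j<k. a < free_walk x \<omega> j \<and> free_walk x \<omega> j < b" for \<omega> k
  proof -
    have "k \<noteq> 0" using that(1) assms(1) by (intro notI) simp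
    then have "a < free_walk x \<omega> 0" using that(2) by blast
    then show False using assms(2) by simp
  qed
  then show ?thesis by (auto simp: exit_high_def)
qed

lemma walk_stays_stopped: "walk N x \<omega> k \<in> {0, int N} \<Longrightarrow> walk N x \<omega> (k + j) = walk N x \<omega> k"
  by (induction j) (auto simp: Let_def)

lemma walk_bounds: "0 \<le> x \<Longrightarrow> x \<le> int N \<Longrightarrow> 0 \<le> walk N x \<omega> k \<and> walk N x \<omega> k \<le> int N"
  by (induction k) (auto simp: Let_def)

lemma walk_eq_free_walk:
  "(\<And>j. j < k \<Longrightarrow> 0 < free_walk x \<omega> j \<and> free_walk x \<omega> j < int N) \<Longrightarrow>
     walk N x \<omega> k = free_walk x \<omega> k"
proof (induction k)
  case (Suc k)
  then have "walk N x \<omega> k = free_walk x \<omega> k" "0 < free_walk x \<omega> k" "free_walk x \<omega> k < int N"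
    by auto
  then show ?case by (auto simp: Let_def step_value_def)
qed simp

lemma walk_at_tau:
  assumes "tau N x \<omega> = enat t"
  shows "walk N x \<omega> t \<in> {0, int N}"
proof (cases "x = 0 \<or> x = int N")
  case False
  then have hit: "\<exists>n\<ge>1. walk N x \<omega> n \<in> {0, int N}"
    and "t = (LEAST n. n \<ge> 1 \<and> walk N x \<omega> n \<in> {0, int N})"
    using assms by (auto simp: tau_def split: if_splits)
  then show ?thesis using LeastI_ex[OF hit] by simp
qed (use assms in \<open>auto simp: tau_def zero_enat_def\<close>)

text \<open>A site is counted by the local time iff the walk visits it at all (it stays put after tau).\<close>
lemma local_time_ge1_iff: "local_time N x \<omega> y \<ge> 1 \<longleftrightarrow> (\<exists>k. walk N x \<omega> k = y)"
proof -
  let ?S = "{k. enat k \<le> tau N x \<omega> \<and> walk N x \<omega> k = y}"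
  have "?S \<noteq> {} \<longleftrightarrow> (\<exists>k. walk N x \<omega> k = y)"
  proof
    assume "\<exists>k. walk N x \<omega> k = y"
    then obtain k where k: "walk N x \<omega> k = y" by auto
    show "?S \<noteq> {}"
    proof (cases "tau N x \<omega>")
      case (enat t)
      have "walk N x \<omega> (t + (k - t)) = walk N x \<omega> t"
        by (rule walk_stays_stopped[OF walk_at_tau[OF enat]])
      then show ?thesis using k enat by (cases "k \<le> t") auto
    qed (use k in auto)
  qed auto
  then show ?thesis
    by (auto simp: local_time_def Let_def one_enat_def zero_enat_def Suc_le_eq card_gt_0_iff)
qed

lemma range_walk_eq: "range_walk N x \<omega> = card {y \<in> {0..int N}. \<exists>k. walk N x \<omega> k = y}"
  by (simp add: range_walk_def local_time_ge1_iff)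

lemma range_walk_card_range:
  assumes "0 \<le> x" "x \<le> int N"
  shows "range_walk N x \<omega> = card (range (walk N x \<omega>))"
proof -
  have "{y \<in> {0..int N}. \<exists>k. walk N x \<omega> k = y} = range (walk N x \<omega>)"
    using walk_bounds[OF assms] by auto
  then show ?thesis by (simp add: range_walk_eq)
qed

lemma range_walk_pos: "0 \<le> x \<Longrightarrow> x \<le> int N \<Longrightarrow> 1 \<le> range_walk N x \<omega>"
  using walk_bounds[of x N \<omega>]
  by (subst range_walk_card_range)
     (auto simp: Suc_le_eq card_gt_0_iff intro: finite_subset[of _ "{0..int N}"])

lemma range_walk_boundary: "x \<in> {0, int N} \<Longrightarrow> range_walk N x \<omega> = 1"
  using walk_stays_stopped[of N x \<omega> 0]
  by (subst range_walk_card_range) (auto simp: image_def)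

lemma walk_range_at_exit:
  assumes "free_walk x \<omega> k \<in> {0, int N}"
    and "\<forall>j<k. 0 < free_walk x \<omega> j \<and> free_walk x \<omega> j < int N"
  shows "range (walk N x \<omega>) = free_walk x \<omega> ` {..k}"
proof -
  have before: "walk N x \<omega> j = free_walk x \<omega> j" if "j \<le> k" for j
    by (rule walk_eq_free_walk) (use that assms in auto)
  have after: "walk N x \<omega> j = free_walk x \<omega> k" if "k \<le> j" for j
    using walk_stays_stopped[of N x \<omega> k "j - k"] before[of k] assms(1) that by auto
  show ?thesis
  proof (intro equalityI subsetI)
    fix v assume "v \<in> range (walk N x \<omega>)"
    then obtain j where "v = walk N x \<omega> j" by auto
    then show "v \<in> free_walk x \<omega> ` {..k}"
      using before after by (cases "j \<le> k") auto
  next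
    fix v assume "v \<in> free_walk x \<omega> ` {..k}"
    then obtain j where "j \<le> k" "v = free_walk x \<omega> j" by auto
    then show "v \<in> range (walk N x \<omega>)" using before by (metis rangeI)
  qed
qed

lemma range_le_iff_exit_low:
  assumes r: "1 \<le> r" "r \<le> N"
    and k: "free_walk x \<omega> k = 0" "\<forall>j<k. 0 < free_walk x \<omega> j \<and> free_walk x \<omega> j < int N"
  shows "card (range (walk N x \<omega>)) \<le> r \<longleftrightarrow> \<omega> \<in> exit_low 0 (int r) x"
proof -
  have "card (range (walk N x \<omega>)) \<le> r \<longleftrightarrow> (\<forall>j<k. free_walk x \<omega> j < int r)"
    using walk_range_at_exit[of x \<omega> k N] k r
    by (simp add: card_excursion_le_iff[where f = "free_walk x \<omega>", OF free_walk_unit_step])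
  also have "\<dots> \<longleftrightarrow> \<omega> \<in> exit_low 0 (int r) x"
  proof
    assume "\<forall>j<k. free_walk x \<omega> j < int r"
    then show "\<omega> \<in> exit_low 0 (int r) x" using k by (auto simp: exit_low_def)
  next
    assume "\<omega> \<in> exit_low 0 (int r) x"
    then obtain k' where k': "free_walk x \<omega> k' = 0"
      "\<forall>j<k'. 0 < free_walk x \<omega> j \<and> free_walk x \<omega> j < int r"
      by (auto simp: exit_low_def)
    then have "k' = k"
      using first_exit_unique[of 0 "free_walk x \<omega>" k' "int N" k] k r by force
    then show "\<forall>j<k. free_walk x \<omega> j < int r" using k' by auto
  qed
  finally show ?thesis .
qed

text \<open>The mirror statement, reduced to the excursion lemma for the reflected path N - X.\<close>
lemma range_le_iff_exit_high:
  assumes r: "1 \<le> r" "r \<le> N"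
    and k: "free_walk x \<omega> k = int N" "\<forall>j<k. 0 < free_walk x \<omega> j \<and> free_walk x \<omega> j < int N"
  shows "card (range (walk N x \<omega>)) \<le> r \<longleftrightarrow> \<omega> \<in> exit_high (int N - int r) (int N) x"
proof -
  define g where "g j = int N - free_walk x \<omega> j" for j
  have g_step: "\<bar>g (Suc i) - g i\<bar> \<le> 1" for i
    using free_walk_unit_step[of x \<omega> i] by (simp add: g_def abs_minus_commute)
  have "card (range (walk N x \<omega>)) = card (free_walk x \<omega> ` {..k})"
    using walk_range_at_exit[of x \<omega> k N] k by simp
  also have "\<dots> = card ((\<lambda>v. int N - v) ` free_walk x \<omega> ` {..k})"
    by (rule card_image[symmetric]) (simp add: inj_on_def)
  also have "(\<lambda>v. int N - v) ` free_walk x \<omega> ` {..k} = g ` {..k}"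
    by (simp add: g_def image_image)
  finally have card_eq: "card (range (walk N x \<omega>)) = card (g ` {..k})" .
  have "card (range (walk N x \<omega>)) \<le> r \<longleftrightarrow> (\<forall>j<k. g j < int r)"
    unfolding card_eq using k r by (intro card_excursion_le_iff[where f = g, OF g_step]) (auto simp: g_def)
  also have "\<dots> \<longleftrightarrow> \<omega> \<in> exit_high (int N - int r) (int N) x"
  proof
    assume "\<forall>j<k. g j < int r"
    then have "\<forall>j<k. int N - int r < free_walk x \<omega> j \<and> free_walk x \<omega> j < int N"
      using k(2) by (auto simp: g_def)
    then show "\<omega> \<in> exit_high (int N - int r) (int N) x" using k(1) by (auto simp: exit_high_def)
  next
    assume "\<omega> \<in> exit_high (int N - int r) (int N) x"
    then obtain k' where k': "free_walk x \<omega> k' = int N"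
      "\<forall>j<k'. int N - int r < free_walk x \<omega> j \<and> free_walk x \<omega> j < int N"
      by (auto simp: exit_high_def)
    then have "k' = k"
      using first_exit_unique[of 0 "free_walk x \<omega>" k' "int N" k] k r by force
    then show "\<forall>j<k. g j < int r" using k' by (auto simp: g_def)
  qed
  finally show ?thesis .
qed

lemma range_le_event:
  assumes x: "0 < x" "x < int N" and r: "1 \<le> r" "r \<le> N"
  shows "{\<omega>. range_walk N x \<omega> \<le> r} - never_exit 0 (int N) x
       = exit_low 0 (int r) x \<union> exit_high (int N - int r) (int N) x"
proof -
  have low: "exit_low 0 (int r) x \<subseteq> exit_low 0 (int N) x"
    by (rule exit_low_mono) (use r in auto)
  have high: "exit_high (int N - int r) (int N) x \<subseteq> exit_high 0 (int N) x"
    by (rule exit_high_mono) (use r in auto)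
  have on_low: "range_walk N x \<omega> \<le> r \<longleftrightarrow> \<omega> \<in> exit_low 0 (int r) x"
    if "\<omega> \<in> exit_low 0 (int N) x" for \<omega>
    using that range_le_iff_exit_low[OF r] range_walk_card_range[of x N] x
    by (auto simp: exit_low_def)
  have on_high: "range_walk N x \<omega> \<le> r \<longleftrightarrow> \<omega> \<in> exit_high (int N - int r) (int N) x"
    if "\<omega> \<in> exit_high 0 (int N) x" for \<omega>
    using that range_le_iff_exit_high[OF r] range_walk_card_range[of x N] x
    by (auto simp: exit_high_def)
  show ?thesis
    using exit_cases[of 0 x "int N"] x on_low on_high low high never_exit_disjoint[of 0 "int N" x]
      exit_low_high_disjoint[of 0 "int N" x]
    by blast
qed

definition step_space :: "real \<Rightarrow> bool stream measure" where
  "step_space q = stream_space (measure_pmf (bernoulli_pmf q))"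

lemma space_step_space [simp]: "space (step_space q) = UNIV"
  by (simp add: step_space_def space_stream_space)

lemma prob_space_step_space: "prob_space (step_space q)"
  unfolding step_space_def by (rule prob_space.prob_space_stream_space[OF measure_pmf.prob_space_axioms])

lemma snth_measurable [measurable]: "(\<lambda>\<omega>. \<omega> !! k) \<in> measurable (step_space q) (count_space UNIV)"
  using measurable_snth[of k "measure_pmf (bernoulli_pmf q)"]
  unfolding step_space_def measurable_cong_sets[OF refl sets_measure_pmf_count_space] .

lemma free_walk_measurable [measurable]:
  "(\<lambda>\<omega>. free_walk x \<omega> k) \<in> measurable (step_space q) (count_space UNIV)"
  by (induction k) simp_all

lemma walk_measurable [measurable]:
  "(\<lambda>\<omega>. walk N x \<omega> k) \<in> measurable (step_space q) (count_space UNIV)"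
  by (induction k) (simp_all add: Let_def)

text \<open>The range is a finite sum of indicators of measurable events.\<close>
lemma range_walk_measurable [measurable]:
  "(\<lambda>\<omega>. real (range_walk N x \<omega>)) \<in> borel_measurable (step_space q)"
proof -
  have "real (range_walk N x \<omega>) = (\<Sum>y\<in>{0..int N}. if \<exists>k. walk N x \<omega> k = y then 1 else 0)"
    for \<omega>
    by (simp add: range_walk_eq sum.inter_filter[symmetric])
  then show ?thesis by simp
qed

text \<open>The exit events are measurable, being countable combinations of events at fixed times.\<close>
lemma exit_low_sets [measurable]: "exit_low a b x \<in> sets (step_space q)"
proof -
  have "{\<omega> \<in> space (step_space q). \<exists>k. free_walk x \<omega> k = a \<and>
           (\<forall>j<k. a < free_walk x \<omega> j \<and> free_walk x \<omega> j < b)} \<in> sets (step_space q)"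
    by measurable
  then show ?thesis by (simp add: exit_low_def)
qed

lemma exit_high_sets [measurable]: "exit_high a b x \<in> sets (step_space q)"
proof -
  have "{\<omega> \<in> space (step_space q). \<exists>k. free_walk x \<omega> k = b \<and>
           (\<forall>j<k. a < free_walk x \<omega> j \<and> free_walk x \<omega> j < b)} \<in> sets (step_space q)"
    by measurable
  then show ?thesis by (simp add: exit_high_def)
qed

lemma never_exit_sets [measurable]: "never_exit a b x \<in> sets (step_space q)"
proof -
  have "{\<omega> \<in> space (step_space q). \<forall>k. a < free_walk x \<omega> k \<and> free_walk x \<omega> k < b}
          \<in> sets (step_space q)"
    by measurable
  then show ?thesis by (simp add: never_exit_def)
qed

section \<open>The walk leaves every bounded interval almost surely\<close>

lemma never_exit_Stream:
  "t ## \<omega> \<in> never_exit a b x \<longleftrightarrow> a < x \<and> x < b \<and> \<omega> \<in> never_exit a b (x + step_value t)"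
proof -
  have split_first: "(\<forall>k. P k) \<longleftrightarrow> P 0 \<and> (\<forall>k. P (Suc k))" for P :: "nat \<Rightarrow> bool"
    by (metis not0_implies_Suc)
  show ?thesis
    unfolding never_exit_def mem_Collect_eq
    by (subst split_first) (simp del: free_walk.simps(2) add: free_walk_Stream)
qed

lemma never_exit_recurrence:
  assumes q: "0 \<le> q" "q \<le> 1" and x: "a < x" "x < b"
  shows "measure (step_space q) (never_exit a b x)
       = q * measure (step_space q) (never_exit a b (x + 1))
         + (1 - q) * measure (step_space q) (never_exit a b (x - 1))"
proof -
  let ?P = "\<lambda>y. measure (step_space q) (never_exit a b y)"
  have "ennreal (?P x) =
      (\<integral>\<^sup>+t. ennreal (?P (x + step_value t)) \<partial>measure_pmf (bernoulli_pmf q))"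
    using prob_space.prob_stream_space[OF measure_pmf.prob_space_axioms,
        of "bernoulli_pmf q" "\<lambda>\<omega>. \<omega> \<in> never_exit a b x"] never_exit_sets[of a b x q] x
    by (simp add: step_space_def space_stream_space never_exit_Stream)
  also have "\<dots> = ennreal (?P (x + 1)) * ennreal q + ennreal (?P (x - 1)) * ennreal (1 - q)"
    using q by (subst nn_integral_bernoulli_pmf) (auto simp: step_value_def)
  also have "\<dots> = ennreal (?P (x + 1) * q) + ennreal (?P (x - 1) * (1 - q))"
    using q by (simp add: ennreal_mult)
  also have "\<dots> = ennreal (?P (x + 1) * q + ?P (x - 1) * (1 - q))"
    by (rule ennreal_plus[symmetric]) (use q in auto)
  finally have "?P x = ?P (x + 1) * q + ?P (x - 1) * (1 - q)"
    using q by (subst (asm) ennreal_inj) auto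
  then show ?thesis by (simp add: mult.commute)
qed

lemma harmonic_vanishes:
  fixes u :: "int \<Rightarrow> real"
  assumes nonneg: "\<And>x. 0 \<le> u x" and outside: "\<And>x. x \<le> a \<or> b \<le> x \<Longrightarrow> u x = 0"
    and harmonic: "\<And>x. a < x \<Longrightarrow> x < b \<Longrightarrow> u x = q * u (x + 1) + (1 - q) * u (x - 1)"
    and q: "0 < q" "q \<le> 1"
  shows "u x = 0"
proof (cases "a < x \<and> x < b")
  case inside: True
  define M where "M = Max (u ` {a..b})"
  have le_M: "u y \<le> M" if "y \<in> {a..b}" for y
    unfolding M_def using that by auto
  obtain x0 where x0: "x0 \<in> {a..b}" "u x0 = M"
    using Max_in[of "u ` {a..b}"] inside unfolding M_def by fastforce
  text \<open>The maximum propagates to the right, one step at a time, until it reaches b.\<close>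
  have propagate: "x0 + int j \<le> b \<longrightarrow> u (x0 + int j) = M" for j
  proof (induction j)
    case (Suc j)
    show ?case
    proof
      assume h: "x0 + int (Suc j) \<le> b"
      define y where "y = x0 + int j"
      have uy: "u y = M" and y1: "y + 1 \<in> {a..b}" using Suc h x0 unfolding y_def by auto
      have "M \<le> u (y + 1)"
      proof (cases "y \<le> a")
        case True
        then show ?thesis using uy outside nonneg[of "y + 1"] by auto
      next
        case False
        then have "a < y" "y < b" using h unfolding y_def by auto
        moreover have "(1 - q) * u (y - 1) \<le> (1 - q) * M"
          using le_M[of "y - 1"] \<open>a < y\<close> \<open>y < b\<close> q by (intro mult_left_mono) auto
        ultimately have "M \<le> q * u (y + 1) + (1 - q) * M"
          using harmonic[of y] uy by linarith
        then have "q * M \<le> q * u (y + 1)" by (simp add: algebra_simps)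
        then show ?thesis using q by simp
      qed
      then have "u (y + 1) = M" using le_M[OF y1] by simp
      moreover have "x0 + int (Suc j) = y + 1" unfolding y_def by simp
      ultimately show "u (x0 + int (Suc j)) = M" by (simp only:)
    qed
  qed (use x0 in simp)
  have "M = 0" using propagate[of "nat (b - x0)"] x0 outside[of b] by auto
  then show ?thesis using le_M[of x] nonneg[of x] inside by auto
qed (use outside in auto)

lemma never_exit_null:
  assumes q: "0 < q" "q \<le> 1"
  shows "measure (step_space q) (never_exit a b x) = 0"
proof (rule harmonic_vanishes[where u = "\<lambda>x. measure (step_space q) (never_exit a b x)"])
  fix y assume "y \<le> a \<or> b \<le> y"
  moreover have "a < y \<and> y < b" if "\<omega> \<in> never_exit a b y" for \<omega>
    using that unfolding never_exit_def by (metis (mono_tags) free_walk.simps(1) mem_Collect_eq)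
  ultimately have "never_exit a b y = {}" by auto
  then show "measure (step_space q) (never_exit a b y) = 0" by simp
qed (use q never_exit_recurrence in auto)

lemma exit_low_plus_high:
  assumes q: "0 < q" "q \<le> 1" and x: "a < x" "x < b"
  shows "measure (step_space q) (exit_low a b x) + measure (step_space q) (exit_high a b x) = 1"
proof -
  interpret P: prob_space "step_space q" by (rule prob_space_step_space)
  have "(exit_low a b x \<union> exit_high a b x) \<union> never_exit a b x = space (step_space q)"
    using exit_cases[OF x] by auto
  then have "1 = measure (step_space q) ((exit_low a b x \<union> exit_high a b x) \<union> never_exit a b x)"
    using P.prob_space by simp
  also have "\<dots> = measure (step_space q) (exit_low a b x) + measure (step_space q) (exit_high a b x)"
    using never_exit_disjoint[of a b x] exit_low_high_disjoint[of a b x] x never_exit_null[OF q]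
    by (simp add: P.finite_measure_Union Int_commute)
  finally show ?thesis by simp
qed

section \<open>The exact distribution of the range\<close>

lemma prob_range_le_interior:
  assumes q: "0 < q" "q \<le> 1" and x: "0 < x" "x < int N" and r: "1 \<le> r" "r \<le> N"
  shows "measure (step_space q) {\<omega>. range_walk N x \<omega> \<le> r}
       = measure (step_space q) (exit_low 0 (int r) x)
         + measure (step_space q) (exit_high (int N - int r) (int N) x)"
proof -
  interpret P: prob_space "step_space q" by (rule prob_space_step_space)
  have event: "{\<omega>. range_walk N x \<omega> \<le> r} \<in> sets (step_space q)"
    using measurable_sets[OF range_walk_measurable[of N x q], of "{..real r}"] by (simp add: vimage_def)
  have null: "never_exit 0 (int N) x \<in> null_sets (step_space q)"
    using never_exit_null[OF q] by (intro null_setsI) (auto simp: P.emeasure_eq_measure)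
  have disjoint: "exit_low 0 (int r) x \<inter> exit_high (int N - int r) (int N) x = {}"
    using exit_low_mono[of "int r" "int N" 0 x] exit_high_mono[of 0 "int N - int r" "int N" x]
      exit_low_high_disjoint[of 0 "int N" x] x r by auto
  have "measure (step_space q) {\<omega>. range_walk N x \<omega> \<le> r}
      = measure (step_space q) ({\<omega>. range_walk N x \<omega> \<le> r} - never_exit 0 (int N) x)"
    using event null by (rule measure_Diff_null_set[symmetric])
  also have "\<dots> = measure (step_space q) (exit_low 0 (int r) x)
                  + measure (step_space q) (exit_high (int N - int r) (int N) x)"
    unfolding range_le_event[OF x r] using disjoint by (simp add: P.finite_measure_Union)
  finally show ?thesis .
qed

lemma sum_prob_range_le:
  assumes q: "0 < q" "q \<le> 1" and r: "1 \<le> r" "r \<le> N"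
  shows "(\<Sum>x\<in>{0..int N}. measure (step_space q) {\<omega>. range_walk N x \<omega> \<le> r}) = real r + 1"
proof -
  interpret P: prob_space "step_space q" by (rule prob_space_step_space)
  let ?m = "\<lambda>x. measure (step_space q) {\<omega>. range_walk N x \<omega> \<le> r}"
  let ?L = "\<lambda>x. measure (step_space q) (exit_low 0 (int r) x)"
  let ?R = "\<lambda>x. measure (step_space q) (exit_high (int N - int r) (int N) x)"
  have boundary: "?m x = 1" if "x \<in> {0, int N}" for x
    using range_walk_boundary[OF that] r P.prob_space by simp
  have "{0..int N} = insert 0 (insert (int N) {1..int N - 1})" using r by auto
  then have "(\<Sum>x\<in>{0..int N}. ?m x) = 2 + (\<Sum>x\<in>{1..int N - 1}. ?m x)"
    using r boundary by simp
  also have "(\<Sum>x\<in>{1..int N - 1}. ?m x) = (\<Sum>x\<in>{1..int N - 1}. ?L x) + (\<Sum>x\<in>{1..int N - 1}. ?R x)"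
    by (subst sum.distrib[symmetric], rule sum.cong) (use prob_range_le_interior[OF q _ _ r] in auto)
  also have "(\<Sum>x\<in>{1..int N - 1}. ?L x) = (\<Sum>x\<in>{1..int r - 1}. ?L x)"
    by (rule sum.mono_neutral_right) (use r exit_low_empty in auto)
  also have "(\<Sum>x\<in>{1..int N - 1}. ?R x) = (\<Sum>x\<in>(\<lambda>y. y + (int N - int r)) ` {1..int r - 1}. ?R x)"
    by (rule sum.mono_neutral_right) (use r exit_high_empty in auto)
  also have "\<dots> = (\<Sum>y\<in>{1..int r - 1}. measure (step_space q) (exit_high 0 (int r) y))"
    using exit_high_shift[of 0 "int N - int r" "int r"] by (subst sum.reindex) (auto simp: inj_on_def)
  also have "(\<Sum>x\<in>{1..int r - 1}. ?L x) + \<dots> = (\<Sum>y\<in>{1..int r - 1}. 1)"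
    by (subst sum.distrib[symmetric], rule sum.cong) (use exit_low_plus_high[OF q] in auto)
  finally show ?thesis using r by simp
qed

lemma range_ratio_measurable:
  "(\<lambda>(x, \<omega>). real (range_walk N x \<omega>) / real N) \<in> borel_measurable (walk_space N q)"
proof -
  have "(\<lambda>(x, \<omega>). real (range_walk N x \<omega>) / real N)
          \<in> borel_measurable (count_space UNIV \<Otimes>\<^sub>M step_space q)"
    by (rule measurable_pair_measure_countable1) simp_all
  then show ?thesis
    unfolding walk_space_def step_space_def[symmetric]
    by (subst measurable_cong_sets[OF sets_pair_measure_cong[OF sets_measure_pmf_count_space refl] refl])
qed

lemma cdf_range_law_sum:
  "cdf (range_law p N) t
     = (\<Sum>x\<in>{0..int N}. measure (step_space (p N)) {\<omega>. real (range_walk N x \<omega>) / real N \<le> t})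
       / (real N + 1)"
proof -
  let ?g = "\<lambda>(x, \<omega>). real (range_walk N x \<omega>) / real N"
  let ?S = "step_space (p N)"
  let ?W = "walk_space N (p N)"
  let ?X = "?g -` {..t} \<inter> space ?W"
  let ?m = "\<lambda>x. measure ?S {\<omega>. real (range_walk N x \<omega>) / real N \<le> t}"
  interpret S: prob_space ?S by (rule prob_space_step_space)
  have W: "?W = measure_pmf (pmf_of_set {0..int N}) \<Otimes>\<^sub>M ?S"
    by (simp add: walk_space_def step_space_def)
  have X: "?X \<in> sets ?W" by (rule measurable_sets[OF range_ratio_measurable]) simp
  have "emeasure ?W ?X = (\<integral>\<^sup>+x. emeasure ?S (Pair x -` ?X) \<partial>measure_pmf (pmf_of_set {0..int N}))"
    unfolding W by (rule S.emeasure_pair_measure_alt) (use X W in simp)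
  also have "\<dots> = (\<integral>\<^sup>+x. ennreal (?m x) \<partial>measure_pmf (pmf_of_set {0..int N}))"
    by (rule nn_integral_cong) (simp add: W space_pair_measure vimage_def S.emeasure_eq_measure)
  also have "\<dots> = (\<Sum>x\<in>{0..int N}. ennreal (?m x)) / of_nat (card {0..int N})"
    by (rule nn_integral_pmf_of_set) auto
  also have "\<dots> = ennreal (\<Sum>x\<in>{0..int N}. ?m x) / ennreal (real N + 1)"
    by (subst sum_ennreal) (auto simp: ennreal_of_nat_eq_real_of_nat)
  also have "\<dots> = ennreal ((\<Sum>x\<in>{0..int N}. ?m x) / (real N + 1))"
    by (rule divide_ennreal) (auto simp: sum_nonneg)
  finally have "measure ?W ?X = (\<Sum>x\<in>{0..int N}. ?m x) / (real N + 1)"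
    by (simp add: measure_def sum_nonneg)
  then show ?thesis
    unfolding cdf_def range_law_def by (simp add: measure_distr[OF range_ratio_measurable])
qed

lemma cdf_range_law_mid:
  assumes q: "0 < p N" "p N \<le> 1" and N: "0 < N"
    and t: "1 \<le> \<lfloor>t * real N\<rfloor>" "\<lfloor>t * real N\<rfloor> \<le> int N"
  shows "cdf (range_law p N) t = (real_of_int \<lfloor>t * real N\<rfloor> + 1) / (real N + 1)"
proof -
  define r where "r = nat \<lfloor>t * real N\<rfloor>"
  have r_int: "int r = \<lfloor>t * real N\<rfloor>"
    unfolding r_def using t(1) by simp
  then have "1 \<le> int r" "int r \<le> int N" using t by simp_all
  then have r: "1 \<le> r" "r \<le> N" "real r = real_of_int \<lfloor>t * real N\<rfloor>"
    by (simp_all flip: r_int)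
  have "real (range_walk N x \<omega>) / real N \<le> t \<longleftrightarrow> range_walk N x \<omega> \<le> r" for x \<omega>
  proof -
    have "real (range_walk N x \<omega>) / real N \<le> t \<longleftrightarrow> real (range_walk N x \<omega>) \<le> t * real N"
      using N by (simp add: divide_le_eq)
    also have "\<dots> \<longleftrightarrow> int (range_walk N x \<omega>) \<le> \<lfloor>t * real N\<rfloor>"
      by (simp add: le_floor_iff)
    finally show ?thesis by (simp flip: r_int)
  qed
  then show ?thesis
    using cdf_range_law_sum[of p N t] sum_prob_range_le[OF q r(1,2)] r(3) by simp
qed

text \<open>Since R_N \<ge> 1, the distribution function vanishes on the nonpositive reals.\<close>
lemma cdf_range_law_low:
  assumes N: "0 < N" and t: "t \<le> 0"
  shows "cdf (range_law p N) t = 0"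
proof -
  have "\<not> real (range_walk N x \<omega>) / real N \<le> t" if "x \<in> {0..int N}" for x \<omega>
  proof -
    have "0 < real (range_walk N x \<omega>) / real N"
      using range_walk_pos[of x N \<omega>] that N by auto
    then show ?thesis using t by linarith
  qed
  then have "{\<omega>. real (range_walk N x \<omega>) / real N \<le> t} = {}" if "x \<in> {0..int N}" for x
    using that by simp
  then show ?thesis using cdf_range_law_sum[of p N t] by simp
qed

lemma prob_space_range_law: "prob_space (range_law p N)"
  unfolding range_law_def walk_space_def
  by (intro prob_space.prob_space_distr prob_space_pair measure_pmf.prob_space_axioms
      prob_space_step_space[unfolded step_space_def] range_ratio_measurable[unfolded walk_space_def])

text \<open>Since R_N / N \<le> 1 almost surely, the distribution function is 1 from t = 1 on.\<close>
lemma cdf_range_law_high: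
  assumes q: "0 < p N" "p N \<le> 1" and N: "0 < N" and t: "1 \<le> t"
  shows "cdf (range_law p N) t = 1"
proof -
  interpret P: prob_space "range_law p N" by (rule prob_space_range_law)
  have "1 = cdf (range_law p N) 1"
    using cdf_range_law_mid[of p N 1, OF q N] N by simp
  also have "\<dots> \<le> cdf (range_law p N) t"
    unfolding cdf_def using t by (intro P.finite_measure_mono) (auto simp: range_law_def)
  finally show ?thesis using P.prob_le_1 by (simp add: cdf_def antisym)
qed

lemma cdf_uniform_unit_interval:
  "cdf (uniform_measure lborel {0..1::real}) t = (if t \<le> 0 then 0 else if t \<le> 1 then t else 1)"
proof -
  have "cdf (uniform_measure lborel {0..1::real}) t
      = measure lborel ({0..1} \<inter> {..t}) / measure lborel {0..1::real}"
    unfolding cdf_def by (rule measure_uniform_measure) simp_all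
  also have "{0..1} \<inter> {..t} = {0..min t 1}" by auto
  finally show ?thesis by (simp add: measure_def emeasure_lborel_Icc_eq)
qed

lemma floor_ratio_tendsto:
  "(\<lambda>N. (real_of_int \<lfloor>t * real N\<rfloor> + 1) / (real N + 1)) \<longlonglongrightarrow> t"
proof (rule tendsto_sandwich)
  show "(\<lambda>N. t * (real N / real (Suc N))) \<longlonglongrightarrow> t"
    using tendsto_mult[OF tendsto_const LIMSEQ_n_over_Suc_n, of t] by simp
  show "(\<lambda>N. t * (real N / real (Suc N)) + inverse (real (Suc N))) \<longlonglongrightarrow> t"
    using tendsto_add[OF tendsto_mult[OF tendsto_const LIMSEQ_n_over_Suc_n, of t]
        LIMSEQ_inverse_real_of_nat] by simp
  have "t * (real N / real (Suc N)) \<le> (real_of_int \<lfloor>t * real N\<rfloor> + 1) / (real N + 1)" for N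
  proof -
    have "t * real N \<le> real_of_int \<lfloor>t * real N\<rfloor> + 1" by linarith
    then show ?thesis by (simp add: divide_right_mono add.commute)
  qed
  then show "\<forall>\<^sub>F N in sequentially. t * (real N / real (Suc N))
               \<le> (real_of_int \<lfloor>t * real N\<rfloor> + 1) / (real N + 1)"
    by simp
  have "(real_of_int \<lfloor>t * real N\<rfloor> + 1) / (real N + 1) \<le> (t * real N + 1) / (real N + 1)" for N
    by (intro divide_right_mono) auto
  also have "(t * real N + 1) / (real N + 1) = t * (real N / real (Suc N)) + inverse (real (Suc N))"
    for N by (simp add: field_simps add.commute)
  finally show "\<forall>\<^sub>F N in sequentially. (real_of_int \<lfloor>t * real N\<rfloor> + 1) / (real N + 1)
               \<le> t * (real N / real (Suc N)) + inverse (real (Suc N))"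
    by simp
qed

lemma cdf_range_law_tendsto:
  assumes p: "\<forall>\<^sub>F N in sequentially. 0 < p N \<and> p N \<le> 1"
  shows "(\<lambda>N. cdf (range_law p N) t) \<longlonglongrightarrow> cdf (uniform_measure lborel {0..1::real}) t"
proof -
  have N_pos: "\<forall>\<^sub>F N in sequentially. 0 < N" by (rule eventually_gt_at_top)
  consider "t \<le> 0" | "0 < t" "t < 1" | "1 \<le> t" by linarith
  then show ?thesis
  proof cases
    case 1
    have "\<forall>\<^sub>F N in sequentially. cdf (range_law p N) t = 0"
      using N_pos by eventually_elim (use 1 cdf_range_law_low in auto)
    then show ?thesis using 1 by (simp add: cdf_uniform_unit_interval tendsto_eventually)
  next
    case 2
    have "\<forall>\<^sub>F N in sequentially. 1 / t \<le> real N"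
      by (rule eventually_sequentiallyI[of "nat \<lceil>1 / t\<rceil>"]) linarith
    then have "\<forall>\<^sub>F N in sequentially.
        (real_of_int \<lfloor>t * real N\<rfloor> + 1) / (real N + 1) = cdf (range_law p N) t"
      using p N_pos
    proof eventually_elim
      case (elim N)
      have "1 \<le> t * real N"
        using elim 2 by (simp add: divide_le_eq mult.commute)
      moreover have "t * real N \<le> real N"
        using 2 by (intro mult_left_le_one_le) auto
      ultimately have "1 \<le> \<lfloor>t * real N\<rfloor>" "\<lfloor>t * real N\<rfloor> \<le> int N"
        by (simp_all add: le_floor_iff floor_le_iff)
      then show ?case using elim by (intro cdf_range_law_mid[symmetric]) auto
    qed
    then show ?thesis
      using tendsto_cong floor_ratio_tendsto[of t] 2 by (fastforce simp: cdf_uniform_unit_interval)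
  next
    case 3
    have "\<forall>\<^sub>F N in sequentially. cdf (range_law p N) t = 1"
      using p N_pos by eventually_elim (use 3 cdf_range_law_high in auto)
    moreover have "cdf (uniform_measure lborel {0..1::real}) t = 1"
      using 3 by (simp add: cdf_uniform_unit_interval)
    ultimately show ?thesis by (simp add: tendsto_eventually)
  qed
qed

lemma regime_admissible:
  fixes p :: "nat \<Rightarrow> real"
  assumes "(\<forall>N. p N = 1/2)
     \<or> (\<exists>c>0. \<forall>\<^sub>F N in sequentially. p N = 1/2 + c / real N)
     \<or> (\<exists>p0. 1/2 < p0 \<and> p0 \<le> 1 \<and> (\<forall>N. p N = p0))"
  shows "\<forall>\<^sub>F N in sequentially. 0 < p N \<and> p N \<le> 1"
  using assms
proof (elim disjE exE conjE)
  assume symmetric: "\<forall>N. p N = 1/2"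
  have "0 < p N \<and> p N \<le> 1" for N
  proof -
    have "p N = 1/2" using symmetric by blast
    then show ?thesis by simp
  qed
  then show ?thesis by simp
next
  fix c :: real assume c: "c > 0" and weak: "\<forall>\<^sub>F N in sequentially. p N = 1/2 + c / real N"
  have "\<forall>\<^sub>F N in sequentially. 2 * c \<le> real N"
    by (rule eventually_sequentiallyI[of "nat \<lceil>2 * c\<rceil>"]) linarith
  with weak show ?thesis
  proof eventually_elim
    case (elim N)
    then have N: "0 < real N" using c by linarith
    have "c / real N \<le> 1/2" using elim(2) N by (simp add: divide_le_eq)
    moreover have "0 < c / real N" using c N by simp
    ultimately show ?case using elim(1) by linarith
  qed
qed auto

theorem proposition2p2:
  fixes p :: "nat \<Rightarrow> real"
  assumes regime:
    "(\<forall>N. p N = 1/2)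
     \<or> (\<exists>c>0. \<forall>\<^sub>F N in sequentially. p N = 1/2 + c / real N)
     \<or> (\<exists>p0. 1/2 < p0 \<and> p0 \<le> 1 \<and> (\<forall>N. p N = p0))"
  shows "weak_conv_m (range_law p) (uniform_measure lborel {0..1::real})"
  unfolding weak_conv_m_def weak_conv_def
  using cdf_range_law_tendsto[OF regime_admissible[OF regime]] by blast

end
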